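(* Consider a deterministic sequential oligopoly $\boldsymbol{n}=(n_1,\dots,n_T)$ in which firm $i$ has payoff $x_i\,a_i(\overline{X}_c^i-X)$ with $a_i>0$ and commonly known parameters $\overline{X}_c^i$, and all equilibria considered are interior. Suppose the equilibrium quantities are $(x_1^*,\dots,x_n^* )$ and that these quantities remain the same when one additional firm, with payoff $x_{n+1}a_{n+1}(\overline{X}_c-X)$, is added alone in a new final period $T+1$. Then $\overline{X}_c^i=\overline{X}_c$ for all firms $i=1,\dots,n$.
   Context: $X=\sum_i x_i$ is total quantity. Interpretation: $\overline{X}_c^i=\overline{X}^i-c_i/a_i$ where firm $i$ has constant marginal cost $c_i$ and inverse demand $a_i(\overline{X}^i-X)$. Firms are partitioned into periods $\mathcal{I}_1,\dots,\mathcal{I}_T$; a firm in period $t$ observes the cumulative quantity of all firms in earlier periods and chooses simultaneously with the other firms of period $t$; equilibrium is subgame perfect. *)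

theory Defs
  imports Complex_Main
begin

(* Sequential oligopoly with firms 1..N, period assignment per :: nat => nat (values in 1..T).
   A strategy profile s assigns to each firm i a function s i :: real => real mapping the
   cumulative quantity Y of all firms in earlier periods to firm i's quantity. *)

definition stage_sum :: "nat \<Rightarrow> (nat \<Rightarrow> nat) \<Rightarrow> (nat \<Rightarrow> real \<Rightarrow> real) \<Rightarrow> nat \<Rightarrow> real \<Rightarrow> real" where
  "stage_sum N per s t Y = (\<Sum>i\<in>{i\<in>{1..N}. per i = t}. s i Y)"

primrec cont_k :: "nat \<Rightarrow> (nat \<Rightarrow> nat) \<Rightarrow> (nat \<Rightarrow> real \<Rightarrow> real) \<Rightarrow> nat \<Rightarrow> nat \<Rightarrow> real \<Rightarrow> real" where
  "cont_k N per s 0 t Y = 0"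
| "cont_k N per s (Suc k) t Y =
     (let q = stage_sum N per s t Y in q + cont_k N per s k (Suc t) (Y + q))"

definition cont :: "nat \<Rightarrow> nat \<Rightarrow> (nat \<Rightarrow> nat) \<Rightarrow> (nat \<Rightarrow> real \<Rightarrow> real) \<Rightarrow> nat \<Rightarrow> real \<Rightarrow> real" where
  "cont N T per s t Y = cont_k N per s (T + 1 - t) t Y"

definition total_dev :: "nat \<Rightarrow> nat \<Rightarrow> (nat \<Rightarrow> nat) \<Rightarrow> (nat \<Rightarrow> real \<Rightarrow> real) \<Rightarrow> nat \<Rightarrow> real \<Rightarrow> real \<Rightarrow> real" where
  "total_dev N T per s i Y x =
     (let others = (\<Sum>j\<in>{j\<in>{1..N}. per j = per i} - {i}. s j Y)
      in Y + x + others + cont N T per s (Suc (per i)) (Y + x + others))"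

definition payoff_dev :: "nat \<Rightarrow> nat \<Rightarrow> (nat \<Rightarrow> nat) \<Rightarrow> (nat \<Rightarrow> real) \<Rightarrow> (nat \<Rightarrow> real) \<Rightarrow> (nat \<Rightarrow> real \<Rightarrow> real) \<Rightarrow> nat \<Rightarrow> real \<Rightarrow> real \<Rightarrow> real" where
  "payoff_dev N T per a Xb s i Y x = x * a i * (Xb i - total_dev N T per s i Y x)"

(* subgame perfect equilibrium: at every history Y of its period, no firm gains by deviating *)
definition is_SPE :: "nat \<Rightarrow> nat \<Rightarrow> (nat \<Rightarrow> nat) \<Rightarrow> (nat \<Rightarrow> real) \<Rightarrow> (nat \<Rightarrow> real) \<Rightarrow> (nat \<Rightarrow> real \<Rightarrow> real) \<Rightarrow> bool" where
  "is_SPE N T per a Xb s \<longleftrightarrow>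
     (\<forall>i\<in>{1..N}. \<forall>Y x. payoff_dev N T per a Xb s i Y x \<le> payoff_dev N T per a Xb s i Y (s i Y))"

primrec hist :: "nat \<Rightarrow> (nat \<Rightarrow> nat) \<Rightarrow> (nat \<Rightarrow> real \<Rightarrow> real) \<Rightarrow> nat \<Rightarrow> real" where
  "hist N per s 0 = 0"
| "hist N per s (Suc t) = hist N per s t + stage_sum N per s t (hist N per s t)"

definition outcome :: "nat \<Rightarrow> (nat \<Rightarrow> nat) \<Rightarrow> (nat \<Rightarrow> real \<Rightarrow> real) \<Rightarrow> nat \<Rightarrow> real" where
  "outcome N per s i = s i (hist N per s (per i))"

end

theory Submission
  imports Defs
begin

text \<open>With linear demand, backward induction shows that in a subgame perfect equilibrium the final
total quantity, as a function of the quantity Y produced before period t, is affine in Y with slope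
m(t), the product of 1/(k(u) + 1) over the periods u from t on, k(u) being the number of firms of
period u. The first-order condition of a firm i of period t then reads m(t+1) x(i) = Xb(i) - X on
the path of play, where X is the equilibrium total. A single entrant in a new last period halves
every slope and produces x = Xc - X', where X' = X + x is the new total. If the old firms keep
their quantities, comparing the two conditions for firm i gives Xb(i) - X = 2x = Xc - X.\<close>

definition final_total ::
    "nat \<Rightarrow> nat \<Rightarrow> (nat \<Rightarrow> nat) \<Rightarrow> (nat \<Rightarrow> real \<Rightarrow> real) \<Rightarrow> nat \<Rightarrow> real \<Rightarrow> real" where
  "final_total N T per s t Y = Y + cont N T per s t Y"

definition period_size :: "nat \<Rightarrow> (nat \<Rightarrow> nat) \<Rightarrow> nat \<Rightarrow> nat" where
  "period_size N per u = card {i\<in>{1..N}. per i = u}"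

definition continuation_slope :: "nat \<Rightarrow> nat \<Rightarrow> (nat \<Rightarrow> nat) \<Rightarrow> nat \<Rightarrow> real" where
  "continuation_slope N T per t = (\<Prod>u\<in>{t..T}. 1 / (real (period_size N per u) + 1))"

lemma final_total_Suc:
  assumes "t \<le> T"
  shows "final_total N T per s t Y = final_total N T per s (Suc t) (Y + stage_sum N per s t Y)"
proof -
  have "T + 1 - t = Suc (T - t)" using assms by simp
  then show ?thesis by (simp add: final_total_def cont_def Let_def algebra_simps)
qed

lemma final_total_after_last [simp]: "final_total N T per s (Suc T) Y = Y"
  by (simp add: final_total_def cont_def)

lemma final_total_on_path:
  "t \<le> Suc T \<Longrightarrow> final_total N T per s t (hist N per s t) = hist N per s (Suc T)"
proof (induction "Suc T - t" arbitrary: t)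
  case 0
  then have "t = Suc T" by simp
  then show ?case by simp
next
  case (Suc d)
  then have "t \<le> T" by simp
  then have "final_total N T per s t (hist N per s t)
      = final_total N T per s (Suc t) (hist N per s (Suc t))"
    by (simp add: final_total_Suc)
  also have "\<dots> = hist N per s (Suc T)"
    using Suc.hyps(2) by (intro Suc.hyps(1)) simp_all
  finally show ?case .
qed

lemma continuation_slope_pos: "continuation_slope N T per t > 0"
  unfolding continuation_slope_def by (rule prod_pos) (simp add: add_pos_nonneg)

lemma continuation_slope_Suc:
  "t \<le> T \<Longrightarrow>
    continuation_slope N T per t = continuation_slope N T per (Suc t) / (real (period_size N per t) + 1)"
  by (simp add: continuation_slope_def atLeastAtMost_insertL[symmetric])

lemma continuation_slope_after_last [simp]: "continuation_slope N T per (Suc T) = 1"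
  by (simp add: continuation_slope_def)

lemma quadratic_maximizer:
  fixes a m c x\<^sub>0 :: real
  assumes "a > 0" "m > 0" and max: "\<And>x. x * a * (c - m * x) \<le> x\<^sub>0 * a * (c - m * x\<^sub>0)"
  shows "2 * m * x\<^sub>0 = c"
proof -
  have "a * c\<^sup>2 / (4 * m) = (c / (2 * m)) * a * (c - m * (c / (2 * m)))"
    using \<open>m > 0\<close> by (simp add: field_simps power2_eq_square)
  also have "\<dots> \<le> x\<^sub>0 * a * (c - m * x\<^sub>0)" by (rule max)
  finally have "a * c\<^sup>2 \<le> 4 * m * (x\<^sub>0 * a * (c - m * x\<^sub>0))"
    using \<open>m > 0\<close> by (simp add: pos_divide_le_eq mult.commute)
  moreover have "a * (2 * m * x\<^sub>0 - c)\<^sup>2 = a * c\<^sup>2 - 4 * m * (x\<^sub>0 * a * (c - m * x\<^sub>0))"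
    by (simp add: power2_eq_square algebra_simps)
  ultimately have "a * (2 * m * x\<^sub>0 - c)\<^sup>2 \<le> 0" by simp
  with \<open>a > 0\<close> have "(2 * m * x\<^sub>0 - c)\<^sup>2 = 0"
    by (simp add: mult_le_0_iff order_antisym)
  then show ?thesis by simp
qed

text \<open>An affine continuation makes firm i's payoff a concave quadratic in its own quantity.\<close>

lemma SPE_first_order_condition:
  assumes spe: "is_SPE N T per a Xb s" and i: "i \<in> {1..N}" "a i > 0" and "m > 0"
    and affine: "\<And>Z. final_total N T per s (Suc (per i)) Z = b + m * Z"
  shows "m * s i Y = Xb i - final_total N T per s (Suc (per i)) (Y + stage_sum N per s (per i) Y)"
proof -
  define P where "P = {j\<in>{1..N}. per j = per i}"
  define others where "others = (\<Sum>j\<in>P - {i}. s j Y)"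
  have "finite P" "i \<in> P" using i by (simp_all add: P_def)
  then have stage: "stage_sum N per s (per i) Y = s i Y + others"
    using sum.remove[of P i "\<lambda>j. s j Y"] by (simp add: stage_sum_def P_def others_def)
  have "total_dev N T per s i Y x = final_total N T per s (Suc (per i)) (Y + x + others)" for x
    by (simp add: total_dev_def final_total_def Let_def others_def P_def)
  then have "\<And>x. payoff_dev N T per a Xb s i Y x = x * a i * ((Xb i - b - m * (Y + others)) - m * x)"
    by (simp add: payoff_dev_def affine algebra_simps)
  with spe i have "\<And>x. x * a i * ((Xb i - b - m * (Y + others)) - m * x)
      \<le> s i Y * a i * ((Xb i - b - m * (Y + others)) - m * s i Y)"
    unfolding is_SPE_def by metis
  then have "2 * m * s i Y = Xb i - b - m * (Y + others)"
    using quadratic_maximizer \<open>a i > 0\<close> \<open>m > 0\<close> by blast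
  then show ?thesis by (simp add: affine stage algebra_simps)
qed

lemma SPE_final_total_affine:
  assumes spe: "is_SPE N T per a Xb s" and a_pos: "\<forall>i\<in>{1..N}. a i > 0" and "t \<le> Suc T"
  shows "\<exists>b. \<forall>Y. final_total N T per s t Y = b + continuation_slope N T per t * Y"
  using \<open>t \<le> Suc T\<close>
proof (induction "Suc T - t" arbitrary: t)
  case 0
  then have "t = Suc T" by simp
  then show ?case by simp
next
  case (Suc d)
  then have "t \<le> T" by simp
  define m where "m = continuation_slope N T per (Suc t)"
  have "\<exists>b. \<forall>Z. final_total N T per s (Suc t) Z = b + m * Z"
    unfolding m_def using Suc.hyps(2) by (intro Suc.hyps(1)) simp_all
  then obtain b where affine: "\<And>Z. final_total N T per s (Suc t) Z = b + m * Z" by blast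
  have "m > 0" by (simp add: m_def continuation_slope_pos)
  define P where "P = {i\<in>{1..N}. per i = t}"
  define k where "k = real (card P)"
  have slope_t: "continuation_slope N T per t = m / (k + 1)"
    using continuation_slope_Suc[OF \<open>t \<le> T\<close>] by (simp add: m_def k_def period_size_def P_def)
  have "final_total N T per s t Y = (b + (\<Sum>i\<in>P. Xb i)) / (k + 1) + continuation_slope N T per t * Y"
    for Y
  proof -
    define S where "S = stage_sum N per s t Y"
    have foc: "m * s i Y = Xb i - (b + m * (Y + S))" if "i \<in> P" for i
      using that SPE_first_order_condition[OF spe _ _ \<open>m > 0\<close>, of i b Y] a_pos affine
      by (auto simp: P_def S_def)
    have "m * S = (\<Sum>i\<in>P. m * s i Y)"
      by (simp add: S_def stage_sum_def P_def sum_distrib_left)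
    also have "\<dots> = (\<Sum>i\<in>P. Xb i - (b + m * (Y + S)))"
      using foc by (rule sum.cong[OF refl])
    also have "\<dots> = (\<Sum>i\<in>P. Xb i) - k * (b + m * (Y + S))"
      by (simp add: sum_subtractf k_def)
    finally have "(b + m * (Y + S)) * (k + 1) = b + (\<Sum>i\<in>P. Xb i) + m * Y"
      by (simp add: algebra_simps)
    then have "b + m * (Y + S) = (b + (\<Sum>i\<in>P. Xb i) + m * Y) / (k + 1)"
      by (simp add: k_def eq_divide_eq add_pos_nonneg)
    moreover have "final_total N T per s t Y = b + m * (Y + S)"
      using final_total_Suc[OF \<open>t \<le> T\<close>] affine by (simp add: S_def)
    ultimately show ?thesis
      by (simp add: slope_t add_divide_distrib)
  qed
  then show ?case by blast
qed

lemma SPE_outcome_first_order_condition: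
  assumes spe: "is_SPE N T per a Xb s" and a_pos: "\<forall>i\<in>{1..N}. a i > 0"
    and i: "i \<in> {1..N}" "per i \<le> T"
  shows "continuation_slope N T per (Suc (per i)) * outcome N per s i = Xb i - hist N per s (Suc T)"
proof -
  obtain b where "\<And>Z. final_total N T per s (Suc (per i)) Z
      = b + continuation_slope N T per (Suc (per i)) * Z"
    using SPE_final_total_affine[OF spe a_pos, of "Suc (per i)"] i by auto
  from SPE_first_order_condition[OF spe i(1) _ continuation_slope_pos this]
  show ?thesis
    using a_pos i final_total_on_path[of "Suc (per i)" T N per s]
    by (simp add: outcome_def)
qed

lemma period_members_extend:
  "u \<le> T \<Longrightarrow> {j\<in>{1..Suc N}. (per(Suc N := Suc T)) j = u} = {j\<in>{1..N}. per j = u}"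
  by auto

lemma period_members_extend_last:
  assumes "\<forall>j\<in>{1..N}. per j \<le> T"
  shows "{j\<in>{1..Suc N}. (per(Suc N := Suc T)) j = Suc T} = {Suc N}"
  using assms by force

lemma stage_sum_extend_last:
  assumes "\<forall>j\<in>{1..N}. per j \<le> T"
  shows "stage_sum (Suc N) (per(Suc N := Suc T)) s' (Suc T) Y = s' (Suc N) Y"
  unfolding stage_sum_def period_members_extend_last[OF assms] by simp

lemma continuation_slope_extend:
  assumes "\<forall>j\<in>{1..N}. per j \<le> T" and "t \<le> Suc T"
  shows "continuation_slope (Suc N) (Suc T) (per(Suc N := Suc T)) t = continuation_slope N T per t / 2"
proof -
  have "{t..Suc T} = insert (Suc T) {t..T}" using \<open>t \<le> Suc T\<close> by auto
  moreover have "period_size (Suc N) (per(Suc N := Suc T)) u = period_size N per u" if "u \<in> {t..T}" for u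
    using that period_members_extend[of u T N per] by (simp add: period_size_def)
  moreover have "period_size (Suc N) (per(Suc N := Suc T)) (Suc T) = 1"
    unfolding period_size_def period_members_extend_last[OF assms(1)] by simp
  ultimately show ?thesis by (simp add: continuation_slope_def)
qed

lemma hist_extend:
  assumes same: "\<forall>j\<in>{1..N}. outcome (Suc N) (per(Suc N := Suc T)) s' j = outcome N per s j"
    and "u \<le> Suc T"
  shows "hist (Suc N) (per(Suc N := Suc T)) s' u = hist N per s u"
  using \<open>u \<le> Suc T\<close>
proof (induction u)
  case 0
  then show ?case by simp
next
  case (Suc u)
  then have "u \<le> T" by simp
  then have IH: "hist (Suc N) (per(Suc N := Suc T)) s' u = hist N per s u"
    by (intro Suc.IH) simp
  have "s' j (hist (Suc N) (per(Suc N := Suc T)) s' u) = s j (hist N per s u)"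
    if "j \<in> {j\<in>{1..N}. per j = u}" for j
  proof -
    from that have "j \<in> {1..N}" "per j = u" by auto
    with same have "outcome (Suc N) (per(Suc N := Suc T)) s' j = outcome N per s j" by blast
    moreover have "(per(Suc N := Suc T)) j = u" using \<open>j \<in> {1..N}\<close> \<open>per j = u\<close> by simp
    ultimately show ?thesis unfolding outcome_def \<open>per j = u\<close> by simp
  qed
  then have "stage_sum (Suc N) (per(Suc N := Suc T)) s' u (hist (Suc N) (per(Suc N := Suc T)) s' u)
      = stage_sum N per s u (hist N per s u)"
    unfolding stage_sum_def period_members_extend[OF \<open>u \<le> T\<close>] by (rule sum.cong[OF refl])
  with IH show ?case by (simp only: hist.simps)
qed

lemma hist_extend_final:
  assumes per_le: "\<forall>j\<in>{1..N}. per j \<le> T"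
    and same: "\<forall>j\<in>{1..N}. outcome (Suc N) (per(Suc N := Suc T)) s' j = outcome N per s j"
  shows "hist (Suc N) (per(Suc N := Suc T)) s' (Suc (Suc T))
    = hist N per s (Suc T) + outcome (Suc N) (per(Suc N := Suc T)) s' (Suc N)"
proof -
  have "hist (Suc N) (per(Suc N := Suc T)) s' (Suc (Suc T))
      = hist (Suc N) (per(Suc N := Suc T)) s' (Suc T) + outcome (Suc N) (per(Suc N := Suc T)) s' (Suc N)"
    by (simp only: hist.simps(2) stage_sum_extend_last[OF per_le] outcome_def fun_upd_same)
  moreover have "hist (Suc N) (per(Suc N := Suc T)) s' (Suc T) = hist N per s (Suc T)"
    by (rule hist_extend[OF same]) simp
  ultimately show ?thesis by (simp only:)
qed

lemma SPE_extend_entrant_condition: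
  assumes spe': "is_SPE (Suc N) (Suc T) (per(Suc N := Suc T)) a' Xb' s'"
    and a'_pos: "\<forall>j\<in>{1..Suc N}. a' j > 0"
    and per_le: "\<forall>j\<in>{1..N}. per j \<le> T"
    and same: "\<forall>j\<in>{1..N}. outcome (Suc N) (per(Suc N := Suc T)) s' j = outcome N per s j"
  shows "2 * outcome (Suc N) (per(Suc N := Suc T)) s' (Suc N) = Xb' (Suc N) - hist N per s (Suc T)"
proof -
  have "continuation_slope (Suc N) (Suc T) (per(Suc N := Suc T)) (Suc ((per(Suc N := Suc T)) (Suc N)))
      * outcome (Suc N) (per(Suc N := Suc T)) s' (Suc N)
      = Xb' (Suc N) - hist (Suc N) (per(Suc N := Suc T)) s' (Suc (Suc T))"
    by (rule SPE_outcome_first_order_condition[OF spe' a'_pos]) simp_all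
  then show ?thesis unfolding hist_extend_final[OF per_le same] by simp
qed

lemma SPE_extend_incumbent_condition:
  assumes spe': "is_SPE (Suc N) (Suc T) (per(Suc N := Suc T)) a' Xb' s'"
    and a'_pos: "\<forall>j\<in>{1..Suc N}. a' j > 0"
    and per_le: "\<forall>j\<in>{1..N}. per j \<le> T"
    and same: "\<forall>j\<in>{1..N}. outcome (Suc N) (per(Suc N := Suc T)) s' j = outcome N per s j"
    and i: "i \<in> {1..N}"
  shows "continuation_slope N T per (Suc (per i)) / 2 * outcome N per s i
    = Xb' i - (hist N per s (Suc T) + outcome (Suc N) (per(Suc N := Suc T)) s' (Suc N))"
proof -
  have "per i \<le> T" using per_le i by simp
  have foc: "continuation_slope (Suc N) (Suc T) (per(Suc N := Suc T)) (Suc ((per(Suc N := Suc T)) i))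
      * outcome (Suc N) (per(Suc N := Suc T)) s' i
      = Xb' i - hist (Suc N) (per(Suc N := Suc T)) s' (Suc (Suc T))"
    by (rule SPE_outcome_first_order_condition[OF spe' a'_pos]) (use i \<open>per i \<le> T\<close> in simp_all)
  have per_i: "(per(Suc N := Suc T)) i = per i" using i by simp
  have slope: "continuation_slope (Suc N) (Suc T) (per(Suc N := Suc T)) (Suc (per i))
      = continuation_slope N T per (Suc (per i)) / 2"
    using continuation_slope_extend[OF per_le] \<open>per i \<le> T\<close> by simp
  have outcome: "outcome (Suc N) (per(Suc N := Suc T)) s' i = outcome N per s i" using same i by blast
  from foc show ?thesis unfolding per_i slope outcome hist_extend_final[OF per_le same] .
qed

theorem proposition4:
  fixes N T :: nat and per :: "nat \<Rightarrow> nat"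
    and a Xb :: "nat \<Rightarrow> real" and a_new Xc :: real
    and s s' :: "nat \<Rightarrow> real \<Rightarrow> real"
  assumes periods: "per ` {1..N} = {1..T}"
    and a_pos: "\<forall>i\<in>{1..N}. a i > 0"
    and a_new_pos: "a_new > 0"
    and spe: "is_SPE N T per a Xb s"
    and spe': "is_SPE (N + 1) (T + 1) (per(N + 1 := T + 1)) (a(N + 1 := a_new)) (Xb(N + 1 := Xc)) s'"
    and interior: "\<forall>i\<in>{1..N}. outcome N per s i > 0"
    and interior': "\<forall>i\<in>{1..N+1}. outcome (N + 1) (per(N + 1 := T + 1)) s' i > 0"
    and same: "\<forall>i\<in>{1..N}. outcome (N + 1) (per(N + 1 := T + 1)) s' i = outcome N per s i"
  shows "\<forall>i\<in>{1..N}. Xb i = Xc"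
proof
  fix i assume i: "i \<in> {1..N}"
  have per_le: "\<forall>j\<in>{1..N}. per j \<le> T" using periods by auto
  have spe'': "is_SPE (Suc N) (Suc T) (per(Suc N := Suc T)) (a(Suc N := a_new)) (Xb(Suc N := Xc)) s'"
    and a_pos': "\<forall>j\<in>{1..Suc N}. (a(Suc N := a_new)) j > 0"
    and same': "\<forall>j\<in>{1..N}. outcome (Suc N) (per(Suc N := Suc T)) s' j = outcome N per s j"
    using spe' a_pos a_new_pos same by auto
  define X where "X = hist N per s (Suc T)"
  define x where "x = outcome (Suc N) (per(Suc N := Suc T)) s' (Suc N)"
  define m where "m = continuation_slope N T per (Suc (per i))"
  have "2 * x = Xc - X"
    using SPE_extend_entrant_condition[OF spe'' a_pos' per_le same'] by (simp add: x_def X_def)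
  moreover have "m * outcome N per s i = Xb i - X"
    using SPE_outcome_first_order_condition[OF spe a_pos i] per_le i by (simp add: m_def X_def)
  moreover have "m / 2 * outcome N per s i = Xb i - (X + x)"
    using SPE_extend_incumbent_condition[OF spe'' a_pos' per_le same' i] i
    by (simp add: m_def X_def x_def)
  ultimately show "Xb i = Xc" by (simp add: algebra_simps)
qed

end
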